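(* Let $p$ be one of $(123,\{0\},\{0\})$, $(123,\{0\},\{0,2\})$, $(132,\{0\},\{0\})$, $(132,\{0\},\{0,2\})$, or any pattern in the same symmetry class as one of these. Then for all $n\ge1$, $a_n(p)=n!-(n-1)!+1$.
   Context: For $n\ge1$, $\mathcal S_n$ is the set of permutations $\pi=\pi_1\cdots\pi_n$ of $[n]$. A bi-vincular pattern of length $k$ is a triple $p=(\sigma,X,Y)$ with $\sigma\in\mathcal S_k$ and $X,Y\subseteq\{0,1,\dots,k\}$. A permutation $\pi\in\mathcal S_n$ contains $p$ if there are indices $1\le i_1<\dots<i_k\le n$ such that $(\pi_{i_1},\dots,\pi_{i_k})$ is order-isomorphic to $\sigma$ and, letting $j_1<\dots<j_k$ be the values $\pi_{i_1},\dots,\pi_{i_k}$ sorted increasingly and setting $i_0=j_0=0$, $i_{k+1}=j_{k+1}=n+1$, one has $i_{x+1}=i_x+1$ for all $x\in X$ and $j_{y+1}=j_y+1$ for all $y\in Y$. Otherwise $\pi$ avoids $p$; $a_n(p)$ is the number of $\pi\in\mathcal S_n$ avoiding $p$. Symmetries: $p^{i}=(\sigma^{-1},Y,X)$, $p^{r}=(\sigma^{r},\{k-x:x\in X\},Y)$, $p^{c}=(\sigma^{c},X,\{k-y:y\in Y\})$ with $\sigma^r_j=\sigma_{k+1-j}$, $\sigma^c_j=k+1-\sigma_j$; the symmetry class of $p$ consists of all patterns obtained from $p$ by finitely many applications of these maps. *)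

theory Defs
  imports "HOL-Combinatorics.Multiset_Permutations"
begin

text \<open>Permutations of [n] are lists pi with set pi = {1..n}, distinct; pi_i = pi ! (i - 1).\<close>

type_synonym bvpat = "nat list \<times> nat set \<times> nat set"

definition valid_bvpat :: "bvpat \<Rightarrow> bool" where
  "valid_bvpat p = (case p of (\<sigma>, X, Y) \<Rightarrow>
     \<sigma> \<in> permutations_of_set {1..length \<sigma>} \<and> X \<subseteq> {0..length \<sigma>} \<and> Y \<subseteq> {0..length \<sigma>})"

definition ext_seq :: "nat \<Rightarrow> nat \<Rightarrow> (nat \<Rightarrow> nat) \<Rightarrow> nat \<Rightarrow> nat" where
  "ext_seq n k f x = (if x = 0 then 0 else if x = k + 1 then n + 1 else f x)"

definition contains_bv :: "nat list \<Rightarrow> bvpat \<Rightarrow> bool" where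
  "contains_bv \<pi> p = (case p of (\<sigma>, X, Y) \<Rightarrow>
     (let n = length \<pi>; k = length \<sigma> in
      \<exists>i :: nat \<Rightarrow> nat.
        (\<forall>a\<in>{1..k}. 1 \<le> i a \<and> i a \<le> n) \<and>
        (\<forall>a\<in>{1..k}. \<forall>b\<in>{1..k}. a < b \<longrightarrow> i a < i b) \<and>
        (\<forall>a\<in>{1..k}. \<forall>b\<in>{1..k}. (\<pi> ! (i a - 1) < \<pi> ! (i b - 1)) \<longleftrightarrow> (\<sigma> ! (a - 1) < \<sigma> ! (b - 1))) \<and>
        (let j = (\<lambda>m. sorted_list_of_set ((\<lambda>a. \<pi> ! (i a - 1)) ` {1..k}) ! (m - 1)) in
          (\<forall>x\<in>X. ext_seq n k i (x + 1) = ext_seq n k i x + 1) \<and>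
          (\<forall>y\<in>Y. ext_seq n k j (y + 1) = ext_seq n k j y + 1))))"

definition avoid_count :: "nat \<Rightarrow> bvpat \<Rightarrow> nat" where
  "avoid_count n p = card {\<pi> \<in> permutations_of_set {1..n}. \<not> contains_bv \<pi> p}"

definition perm_inv_list :: "nat list \<Rightarrow> nat list" where
  "perm_inv_list \<sigma> = map (\<lambda>v. (THE a. a < length \<sigma> \<and> \<sigma> ! a = v) + 1) [1..<length \<sigma> + 1]"

definition bv_inv :: "bvpat \<Rightarrow> bvpat" where
  "bv_inv p = (case p of (\<sigma>, X, Y) \<Rightarrow> (perm_inv_list \<sigma>, Y, X))"

definition bv_rev :: "bvpat \<Rightarrow> bvpat" where
  "bv_rev p = (case p of (\<sigma>, X, Y) \<Rightarrow> (rev \<sigma>, (\<lambda>x. length \<sigma> - x) ` X, Y))"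

definition bv_comp :: "bvpat \<Rightarrow> bvpat" where
  "bv_comp p = (case p of (\<sigma>, X, Y) \<Rightarrow>
     (map (\<lambda>v. length \<sigma> + 1 - v) \<sigma>, X, (\<lambda>y. length \<sigma> - y) ` Y))"

inductive_set sym_class :: "bvpat \<Rightarrow> bvpat set" for p :: bvpat where
  base: "p \<in> sym_class p"
| inv: "q \<in> sym_class p \<Longrightarrow> bv_inv q \<in> sym_class p"
| rev: "q \<in> sym_class p \<Longrightarrow> bv_rev q \<in> sym_class p"
| comp: "q \<in> sym_class p \<Longrightarrow> bv_comp q \<in> sym_class p"

end

theory Submission
  imports Defs
begin

text \<open>Since \<open>0 \<in> X\<close> and \<open>0 \<in> Y\<close>, the letter playing the role of \<open>1\<close> in an occurrence of any of
  the four base patterns must be the first letter of \<open>\<pi>\<close> and must equal \<open>1\<close>. So \<open>\<pi>\<close> contains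
  the pattern iff \<open>\<pi>\<^sub>1 = 1\<close> and the remaining letters, a permutation of \<open>{2..n}\<close>, contain
  an ascent, an ascent by exactly one, a descent, or a descent by exactly one, respectively.
  As the remaining letters are consecutive values, an ascent forces an ascent by one, so in each
  case exactly one of the \<open>(n - 1)!\<close> permutations starting with \<open>1\<close> avoids the pattern: the one
  whose tail is decreasing (for 123) or increasing (for 132). Reversal, complement and inverse
  are involutions of \<open>S\<^sub>n\<close> mapping occurrences of \<open>p\<close> to occurrences of the transformed
  pattern, so \<open>a\<^sub>n\<close> is constant on symmetry classes.\<close>

section \<open>Positions and inverse permutations\<close>

abbreviation is_perm :: "nat list \<Rightarrow> bool" where
  "is_perm \<sigma> \<equiv> \<sigma> \<in> permutations_of_set {1..length \<sigma>}"

definition position :: "nat list \<Rightarrow> nat \<Rightarrow> nat" where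
  "position \<sigma> m = (THE a. a < length \<sigma> \<and> \<sigma> ! a = m) + 1"

lemma is_perm_iff: "is_perm \<sigma> \<longleftrightarrow> set \<sigma> = {1..length \<sigma>} \<and> distinct \<sigma>"
  by (simp add: permutations_of_set_def)

lemma length_perm_of_set: "\<pi> \<in> permutations_of_set {1..n} \<Longrightarrow> length \<pi> = n"
  by (metis card_atLeastAtMost diff_Suc_1 distinct_card permutations_of_setD)

lemma is_perm_if_perm_of_set: "\<pi> \<in> permutations_of_set {1..n} \<Longrightarrow> is_perm \<pi>"
  using length_perm_of_set by metis

lemma nth_is_perm: "is_perm \<sigma> \<Longrightarrow> a < length \<sigma> \<Longrightarrow> \<sigma> ! a \<in> {1..length \<sigma>}"
  using is_perm_iff nth_mem by blast

lemma position_nth: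
  assumes "is_perm \<sigma>" "a < length \<sigma>"
  shows "position \<sigma> (\<sigma> ! a) = a + 1"
proof -
  have "(THE b. b < length \<sigma> \<and> \<sigma> ! b = \<sigma> ! a) = a"
    by (rule the_equality) (use assms nth_eq_iff_index_eq is_perm_iff in auto)
  then show ?thesis by (simp add: position_def)
qed

lemma position_in_range:
  assumes "is_perm \<sigma>" "m \<in> {1..length \<sigma>}"
  shows "position \<sigma> m \<in> {1..length \<sigma>}" and "\<sigma> ! (position \<sigma> m - 1) = m"
proof -
  obtain a where "a < length \<sigma>" "\<sigma> ! a = m"
    using assms is_perm_iff by (metis in_set_conv_nth)
  then show "position \<sigma> m \<in> {1..length \<sigma>}" "\<sigma> ! (position \<sigma> m - 1) = m"
    using position_nth[OF assms(1)] by auto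
qed

lemma bij_betw_position:
  assumes "is_perm \<sigma>"
  shows "bij_betw (position \<sigma>) {1..length \<sigma>} {1..length \<sigma>}"
proof (rule bij_betw_imageI)
  show "inj_on (position \<sigma>) {1..length \<sigma>}"
    by (rule inj_onI) (metis assms position_in_range(2))
  show "position \<sigma> ` {1..length \<sigma>} = {1..length \<sigma>}"
  proof (intro equalityI subsetI)
    fix a assume "a \<in> {1..length \<sigma>}"
    then have "a = position \<sigma> (\<sigma> ! (a - 1))" "\<sigma> ! (a - 1) \<in> {1..length \<sigma>}"
      using position_nth[OF assms, of "a - 1"] nth_is_perm[OF assms, of "a - 1"] by auto
    then show "a \<in> position \<sigma> ` {1..length \<sigma>}" by blast
  qed (use position_in_range[OF assms] in auto)
qed

lemma perm_inv_list_conv_map: "perm_inv_list \<sigma> = map (position \<sigma>) [1..<length \<sigma> + 1]"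
  unfolding perm_inv_list_def position_def ..

lemma length_perm_inv_list [simp]: "length (perm_inv_list \<sigma>) = length \<sigma>"
  by (simp add: perm_inv_list_conv_map del: upt_Suc)

lemma nth_perm_inv_list: "m < length \<sigma> \<Longrightarrow> perm_inv_list \<sigma> ! m = position \<sigma> (m + 1)"
  by (simp add: perm_inv_list_conv_map nth_map_upt del: upt_Suc)

lemma is_perm_perm_inv_list:
  assumes "is_perm \<sigma>"
  shows "is_perm (perm_inv_list \<sigma>)"
  using bij_betw_position[OF assms]
  unfolding is_perm_iff perm_inv_list_conv_map bij_betw_def
  by (simp add: distinct_map atLeastLessThanSuc_atLeastAtMost del: upt_Suc)

lemma position_perm_inv_list:
  assumes "is_perm \<sigma>" "m \<in> {1..length \<sigma>}"
  shows "position (perm_inv_list \<sigma>) m = \<sigma> ! (m - 1)"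
proof -
  have v: "\<sigma> ! (m - 1) \<in> {1..length \<sigma>}" using nth_is_perm[OF assms(1), of "m - 1"] assms(2) by auto
  then have "perm_inv_list \<sigma> ! (\<sigma> ! (m - 1) - 1) = m"
    using nth_perm_inv_list[of "\<sigma> ! (m - 1) - 1" \<sigma>] position_nth[OF assms(1), of "m - 1"] assms(2)
    by auto
  moreover have "\<sigma> ! (m - 1) - 1 < length (perm_inv_list \<sigma>)" using v by auto
  ultimately show ?thesis
    using position_nth[OF is_perm_perm_inv_list[OF assms(1)], of "\<sigma> ! (m - 1) - 1"] v by simp
qed

lemma perm_inv_list_perm_inv_list:
  assumes "is_perm \<sigma>"
  shows "perm_inv_list (perm_inv_list \<sigma>) = \<sigma>"
proof (rule nth_equalityI)
  fix a assume "a < length (perm_inv_list (perm_inv_list \<sigma>))"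
  then show "perm_inv_list (perm_inv_list \<sigma>) ! a = \<sigma> ! a"
    using nth_perm_inv_list[of a "perm_inv_list \<sigma>"] position_perm_inv_list[OF assms, of "a + 1"]
    by simp
qed simp

lemma position_rev:
  assumes "is_perm \<sigma>" "m \<in> {1..length \<sigma>}"
  shows "position (rev \<sigma>) m = length \<sigma> + 1 - position \<sigma> m"
proof -
  let ?k = "length \<sigma>" and ?b = "position \<sigma> m"
  have b: "?b \<in> {1..?k}" "\<sigma> ! (?b - 1) = m" using position_in_range[OF assms] by auto
  have "rev \<sigma> ! (?k - ?b) = \<sigma> ! (?k - Suc (?k - ?b))" using b by (intro rev_nth) auto
  also have "?k - Suc (?k - ?b) = ?b - 1" using b by auto
  finally have "rev \<sigma> ! (?k - ?b) = m" using b by simp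
  moreover have "is_perm (rev \<sigma>)" using assms(1) by (simp add: permutations_of_set_def)
  moreover have "?k - ?b < length (rev \<sigma>)" using b by auto
  ultimately show ?thesis using position_nth[of "rev \<sigma>" "?k - ?b"] b by (simp add: Suc_diff_le)
qed

lemma map_compl_perm_of_set:
  assumes "xs \<in> permutations_of_set {1..(k::nat)}"
  shows "map (\<lambda>v. k + 1 - v) xs \<in> permutations_of_set {1..k}"
proof -
  have inj: "inj_on (\<lambda>v. k + 1 - v) {1..k}" by (rule inj_onI) auto
  have "(\<lambda>v. k + 1 - v) ` {1..k} = {1..k}"
    by (rule endo_inj_surj) (use inj in auto)
  then show ?thesis using assms inj by (auto simp: permutations_of_set_def distinct_map)
qed

lemma position_map_compl:
  assumes "is_perm \<sigma>" "m \<in> {1..length \<sigma>}"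
  shows "position (map (\<lambda>v. length \<sigma> + 1 - v) \<sigma>) m = position \<sigma> (length \<sigma> + 1 - m)"
proof -
  let ?k = "length \<sigma>" and ?b = "position \<sigma> (length \<sigma> + 1 - m)"
  have "?k + 1 - m \<in> {1..?k}" using assms(2) by auto
  then have b: "?b \<in> {1..?k}" "\<sigma> ! (?b - 1) = ?k + 1 - m"
    using position_in_range[OF assms(1)] by auto
  then have "map (\<lambda>v. ?k + 1 - v) \<sigma> ! (?b - 1) = m" using assms(2) by auto
  moreover have "is_perm (map (\<lambda>v. ?k + 1 - v) \<sigma>)" using map_compl_perm_of_set[OF assms(1)] by simp
  ultimately show ?thesis using position_nth[of _ "?b - 1"] b by fastforce
qed

section \<open>Occurrences\<close>

text \<open>Being order-isomorphic to \<open>\<sigma>\<close>, an occurrence at the indices \<open>i\<close> has its \<open>m\<close>-th smallest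
  value at index \<open>i (position \<sigma> m)\<close>; this replaces the sorted list of values in \<open>contains_bv\<close>.\<close>

definition occurs_at :: "nat list \<Rightarrow> nat list \<Rightarrow> nat set \<Rightarrow> nat set \<Rightarrow> (nat \<Rightarrow> nat) \<Rightarrow> bool" where
  "occurs_at \<pi> \<sigma> X Y i = (let n = length \<pi>; k = length \<sigma>; j = (\<lambda>m. \<pi> ! (i (position \<sigma> m) - 1)) in
    (\<forall>a\<in>{1..k}. 1 \<le> i a \<and> i a \<le> n) \<and> (\<forall>a\<in>{1..k}. \<forall>b\<in>{1..k}. a < b \<longrightarrow> i a < i b) \<and>
    (\<forall>a\<in>{1..k}. \<forall>b\<in>{1..k}. (\<pi> ! (i a - 1) < \<pi> ! (i b - 1)) \<longleftrightarrow> (\<sigma> ! (a - 1) < \<sigma> ! (b - 1))) \<and>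
    (\<forall>x\<in>X. ext_seq n k i (x + 1) = ext_seq n k i x + 1) \<and>
    (\<forall>y\<in>Y. ext_seq n k j (y + 1) = ext_seq n k j y + 1))"

lemma sorted_list_of_occurrence_values:
  assumes "is_perm \<sigma>"
    and iso: "\<forall>a\<in>{1..length \<sigma>}. \<forall>b\<in>{1..length \<sigma>}.
                (\<pi> ! (i a - 1) < \<pi> ! (i b - 1)) \<longleftrightarrow> (\<sigma> ! (a - 1) < \<sigma> ! (b - 1))"
  shows "sorted_list_of_set ((\<lambda>a. \<pi> ! (i a - 1)) ` {1..length \<sigma>})
         = map (\<lambda>m. \<pi> ! (i (position \<sigma> m) - 1)) [1..<length \<sigma> + 1]"
    (is "_ = ?l")
proof -
  let ?k = "length \<sigma>"
  have "set ?l = (\<lambda>a. \<pi> ! (i a - 1)) ` (position \<sigma> ` {1..?k})"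
    by (simp add: image_image atLeastLessThanSuc_atLeastAtMost del: upt_Suc)
  also have "position \<sigma> ` {1..?k} = {1..?k}"
    using bij_betw_position[OF assms(1)] by (simp add: bij_betw_def)
  finally have set_l: "set ?l = (\<lambda>a. \<pi> ! (i a - 1)) ` {1..?k}" .
  have "sorted_wrt (<) ?l"
    unfolding sorted_wrt_iff_nth_less
  proof (intro allI impI)
    fix p q assume pq: "p < q" "q < length ?l"
    then have "q < ?k" by (simp del: upt_Suc)
    with pq have "\<pi> ! (i (position \<sigma> (p + 1)) - 1) < \<pi> ! (i (position \<sigma> (q + 1)) - 1)"
      using iso position_in_range[OF assms(1), of "p + 1"] position_in_range[OF assms(1), of "q + 1"]
      by auto
    then show "?l ! p < ?l ! q" using pq \<open>q < ?k\<close> by (simp add: nth_map_upt del: upt_Suc)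
  qed
  then show ?thesis
    using set_l by (metis sorted_list_of_set.idem_if_sorted_distinct strict_sorted_iff)
qed

lemma ext_seq_cong:
  "\<forall>m\<in>{1..k}. f m = g m \<Longrightarrow> x \<le> k + 1 \<Longrightarrow> ext_seq n k f x = ext_seq n k g x"
  by (auto simp: ext_seq_def)

lemma contains_bv_iff_occurs_at:
  assumes "valid_bvpat (\<sigma>, X, Y)"
  shows "contains_bv \<pi> (\<sigma>, X, Y) \<longleftrightarrow> (\<exists>i. occurs_at \<pi> \<sigma> X Y i)"
proof -
  let ?k = "length \<sigma>" and ?n = "length \<pi>"
  have perm: "is_perm \<sigma>" and Y: "Y \<subseteq> {0..?k}" using assms by (auto simp: valid_bvpat_def)
  have "(\<forall>y\<in>Y. ext_seq ?n ?k (\<lambda>m. sorted_list_of_set ((\<lambda>a. \<pi> ! (i a - 1)) ` {1..?k}) ! (m - 1)) (y + 1)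
             = ext_seq ?n ?k (\<lambda>m. sorted_list_of_set ((\<lambda>a. \<pi> ! (i a - 1)) ` {1..?k}) ! (m - 1)) y + 1)
        \<longleftrightarrow> (\<forall>y\<in>Y. ext_seq ?n ?k (\<lambda>m. \<pi> ! (i (position \<sigma> m) - 1)) (y + 1)
             = ext_seq ?n ?k (\<lambda>m. \<pi> ! (i (position \<sigma> m) - 1)) y + 1)"
    if iso: "\<forall>a\<in>{1..?k}. \<forall>b\<in>{1..?k}. (\<pi> ! (i a - 1) < \<pi> ! (i b - 1)) \<longleftrightarrow> (\<sigma> ! (a - 1) < \<sigma> ! (b - 1))"
    for i
  proof -
    have value_eq: "\<forall>m\<in>{1..?k}. sorted_list_of_set ((\<lambda>a. \<pi> ! (i a - 1)) ` {1..?k}) ! (m - 1)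
                       = \<pi> ! (i (position \<sigma> m) - 1)"
      using sorted_list_of_occurrence_values[OF perm iso] by (auto simp: nth_map_upt simp del: upt_Suc)
    have ext_eq: "ext_seq ?n ?k (\<lambda>m. sorted_list_of_set ((\<lambda>a. \<pi> ! (i a - 1)) ` {1..?k}) ! (m - 1)) y
        = ext_seq ?n ?k (\<lambda>m. \<pi> ! (i (position \<sigma> m) - 1)) y" if "y \<le> ?k + 1" for y
      using ext_seq_cong[OF value_eq that] .
    show ?thesis using Y by (intro ball_cong refl) (auto simp: subset_iff ext_eq[simplified])
  qed
  then show ?thesis unfolding contains_bv_def occurs_at_def Let_def prod.case by blast
qed

section \<open>Symmetries\<close>

lemma ext_seq_reflect:
  assumes "\<forall>m\<in>{1..k}. g m = n + 1 - f (k + 1 - m)" "y \<le> k + 1"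
  shows "ext_seq n k g y = n + 1 - ext_seq n k f (k + 1 - y)"
  using assms by (auto simp: ext_seq_def)

lemma ext_seq_reflect_adjacent:
  assumes g: "\<forall>m\<in>{1..k}. g m = n + 1 - f (k + 1 - m)" and f: "\<forall>m\<in>{1..k}. f m \<le> n"
    and "x \<le> k" and adj: "ext_seq n k f (x + 1) = ext_seq n k f x + 1"
  shows "ext_seq n k g (k - x + 1) = ext_seq n k g (k - x) + 1"
proof -
  have "ext_seq n k g (k - x + 1) = n + 1 - ext_seq n k f x"
    using ext_seq_reflect[OF g, of "k - x + 1"] \<open>x \<le> k\<close> by simp
  moreover have "ext_seq n k g (k - x) = n + 1 - ext_seq n k f (x + 1)"
    using ext_seq_reflect[OF g, of "k - x"] \<open>x \<le> k\<close> by (simp add: Suc_diff_le)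
  moreover have "ext_seq n k f (x + 1) \<le> n + 1"
    using f[rule_format, of "x + 1"] \<open>x \<le> k\<close> by (cases "x = k") (auto simp: ext_seq_def)
  ultimately show ?thesis using adj by simp
qed

lemma occurs_at_rev:
  assumes v: "valid_bvpat (\<sigma>, X, Y)" and o: "occurs_at \<pi> \<sigma> X Y i"
  shows "occurs_at (rev \<pi>) (rev \<sigma>) ((\<lambda>x. length \<sigma> - x) ` X) Y
           (\<lambda>a. length \<pi> + 1 - i (length \<sigma> + 1 - a))"
proof -
  let ?k = "length \<sigma>" and ?n = "length \<pi>"
  define i' where "i' = (\<lambda>a. ?n + 1 - i (?k + 1 - a))"
  have perm: "is_perm \<sigma>" and X: "X \<subseteq> {0..?k}" and Y: "Y \<subseteq> {0..?k}"
    using v by (auto simp: valid_bvpat_def)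
  have r: "\<forall>a\<in>{1..?k}. 1 \<le> i a \<and> i a \<le> ?n"
    and m: "\<forall>a\<in>{1..?k}. \<forall>b\<in>{1..?k}. a < b \<longrightarrow> i a < i b"
    and iso: "\<forall>a\<in>{1..?k}. \<forall>b\<in>{1..?k}. (\<pi> ! (i a - 1) < \<pi> ! (i b - 1)) \<longleftrightarrow> (\<sigma> ! (a - 1) < \<sigma> ! (b - 1))"
    and ox: "\<forall>x\<in>X. ext_seq ?n ?k i (x + 1) = ext_seq ?n ?k i x + 1"
    and oy: "\<forall>y\<in>Y. ext_seq ?n ?k (\<lambda>m. \<pi> ! (i (position \<sigma> m) - 1)) (y + 1)
                   = ext_seq ?n ?k (\<lambda>m. \<pi> ! (i (position \<sigma> m) - 1)) y + 1"
    using o unfolding occurs_at_def Let_def by auto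
  have refl: "a \<in> {1..?k} \<Longrightarrow> ?k + 1 - a \<in> {1..?k}" for a by auto
  have r': "\<forall>a\<in>{1..?k}. 1 \<le> i' a \<and> i' a \<le> ?n" using r refl unfolding i'_def by fastforce
  have \<pi>_rev: "rev \<pi> ! (i' a - 1) = \<pi> ! (i (?k + 1 - a) - 1)" if "a \<in> {1..?k}" for a
  proof -
    have "1 \<le> i (?k + 1 - a)" "i (?k + 1 - a) \<le> ?n" using r refl[OF that] by auto
    then show ?thesis unfolding i'_def by (simp add: rev_nth Suc_diff_Suc)
  qed
  have \<sigma>_rev: "rev \<sigma> ! (a - 1) = \<sigma> ! ((?k + 1 - a) - 1)" if "a \<in> {1..?k}" for a
    using that rev_nth[of "a - 1" \<sigma>] by auto
  have m': "\<forall>a\<in>{1..?k}. \<forall>b\<in>{1..?k}. a < b \<longrightarrow> i' a < i' b"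
  proof (intro ballI impI)
    fix a b assume ab: "a \<in> {1..?k}" "b \<in> {1..?k}" "a < b"
    then have "i (?k + 1 - b) < i (?k + 1 - a)" "i (?k + 1 - a) \<le> ?n" using m r refl by auto
    then show "i' a < i' b" unfolding i'_def by simp
  qed
  have iso': "\<forall>a\<in>{1..?k}. \<forall>b\<in>{1..?k}.
                (rev \<pi> ! (i' a - 1) < rev \<pi> ! (i' b - 1)) \<longleftrightarrow> (rev \<sigma> ! (a - 1) < rev \<sigma> ! (b - 1))"
    using iso refl \<pi>_rev \<sigma>_rev by simp
  have ox': "\<forall>x\<in>(\<lambda>x. ?k - x) ` X. ext_seq ?n ?k i' (x + 1) = ext_seq ?n ?k i' x + 1"
    using ext_seq_reflect_adjacent[of ?k i' ?n i] r ox X unfolding i'_def by fastforce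
  have value_eq: "\<forall>m\<in>{1..?k}. rev \<pi> ! (i' (position (rev \<sigma>) m) - 1) = \<pi> ! (i (position \<sigma> m) - 1)"
  proof
    fix m assume m: "m \<in> {1..?k}"
    have "position \<sigma> m \<in> {1..?k}" using position_in_range[OF perm m] by simp
    then show "rev \<pi> ! (i' (position (rev \<sigma>) m) - 1) = \<pi> ! (i (position \<sigma> m) - 1)"
      using \<pi>_rev[OF refl] position_rev[OF perm m] by simp
  qed
  have oy': "\<forall>y\<in>Y. ext_seq ?n ?k (\<lambda>m. rev \<pi> ! (i' (position (rev \<sigma>) m) - 1)) (y + 1)
                 = ext_seq ?n ?k (\<lambda>m. rev \<pi> ! (i' (position (rev \<sigma>) m) - 1)) y + 1"
    using oy Y ext_seq_cong[OF value_eq] by (auto simp: subset_iff)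
  show ?thesis unfolding occurs_at_def Let_def i'_def[symmetric] using r' m' iso' ox' oy' by simp
qed

lemma reflect_less_iff: "(a::nat) \<le> n \<Longrightarrow> b \<le> n \<Longrightarrow> n + 1 - a < n + 1 - b \<longleftrightarrow> b < a"
  by arith

lemma occurs_at_comp:
  assumes v: "valid_bvpat (\<sigma>, X, Y)" and "is_perm \<pi>" and o: "occurs_at \<pi> \<sigma> X Y i"
  shows "occurs_at (map (\<lambda>v. length \<pi> + 1 - v) \<pi>) (map (\<lambda>v. length \<sigma> + 1 - v) \<sigma>)
           X ((\<lambda>y. length \<sigma> - y) ` Y) i"
proof -
  let ?k = "length \<sigma>" and ?n = "length \<pi>"
  define \<pi>' where "\<pi>' = map (\<lambda>v. ?n + 1 - v) \<pi>"
  define \<sigma>' where "\<sigma>' = map (\<lambda>v. ?k + 1 - v) \<sigma>"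
  define j where "j = (\<lambda>m. \<pi> ! (i (position \<sigma> m) - 1))"
  have perm: "is_perm \<sigma>" and Y: "Y \<subseteq> {0..?k}" using v by (auto simp: valid_bvpat_def)
  have r: "\<forall>a\<in>{1..?k}. 1 \<le> i a \<and> i a \<le> ?n"
    and m: "\<forall>a\<in>{1..?k}. \<forall>b\<in>{1..?k}. a < b \<longrightarrow> i a < i b"
    and iso: "\<forall>a\<in>{1..?k}. \<forall>b\<in>{1..?k}. (\<pi> ! (i a - 1) < \<pi> ! (i b - 1)) \<longleftrightarrow> (\<sigma> ! (a - 1) < \<sigma> ! (b - 1))"
    and ox: "\<forall>x\<in>X. ext_seq ?n ?k i (x + 1) = ext_seq ?n ?k i x + 1"
    and oy: "\<forall>y\<in>Y. ext_seq ?n ?k j (y + 1) = ext_seq ?n ?k j y + 1"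
    using o unfolding occurs_at_def Let_def j_def by auto
  have \<pi>_range: "\<pi> ! (i a - 1) \<in> {1..?n}" if "a \<in> {1..?k}" for a
    using nth_is_perm[OF \<open>is_perm \<pi>\<close>, of "i a - 1"] r that by fastforce
  have \<sigma>_range: "\<sigma> ! (a - 1) \<in> {1..?k}" if "a \<in> {1..?k}" for a
    using nth_is_perm[OF perm, of "a - 1"] that by fastforce
  have \<pi>_comp: "\<pi>' ! (i a - 1) = ?n + 1 - \<pi> ! (i a - 1)" if "a \<in> {1..?k}" for a
    using r that unfolding \<pi>'_def by fastforce
  have \<sigma>_comp: "\<sigma>' ! (a - 1) = ?k + 1 - \<sigma> ! (a - 1)" if "a \<in> {1..?k}" for a
    using that unfolding \<sigma>'_def by auto
  have iso': "\<forall>a\<in>{1..?k}. \<forall>b\<in>{1..?k}. (\<pi>' ! (i a - 1) < \<pi>' ! (i b - 1)) \<longleftrightarrow> (\<sigma>' ! (a - 1) < \<sigma>' ! (b - 1))"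
  proof (intro ballI)
    fix a b assume ab: "a \<in> {1..?k}" "b \<in> {1..?k}"
    have "(\<pi>' ! (i a - 1) < \<pi>' ! (i b - 1)) \<longleftrightarrow> \<pi> ! (i b - 1) < \<pi> ! (i a - 1)"
      using \<pi>_comp[OF ab(1)] \<pi>_comp[OF ab(2)] \<pi>_range[OF ab(1)] \<pi>_range[OF ab(2)]
        reflect_less_iff[of "\<pi> ! (i a - 1)" ?n "\<pi> ! (i b - 1)"] by simp
    also have "\<dots> \<longleftrightarrow> \<sigma> ! (b - 1) < \<sigma> ! (a - 1)" using iso ab by auto
    also have "\<dots> \<longleftrightarrow> (\<sigma>' ! (a - 1) < \<sigma>' ! (b - 1))"
      using \<sigma>_comp[OF ab(1)] \<sigma>_comp[OF ab(2)] \<sigma>_range[OF ab(1)] \<sigma>_range[OF ab(2)]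
        reflect_less_iff[of "\<sigma> ! (a - 1)" ?k "\<sigma> ! (b - 1)"] by simp
    finally show "(\<pi>' ! (i a - 1) < \<pi>' ! (i b - 1)) \<longleftrightarrow> (\<sigma>' ! (a - 1) < \<sigma>' ! (b - 1))" .
  qed
  have j_bound: "\<forall>m\<in>{1..?k}. j m \<le> ?n"
    unfolding j_def using \<pi>_range position_in_range(1)[OF perm] by fastforce
  have j_comp: "\<forall>m\<in>{1..?k}. \<pi>' ! (i (position \<sigma>' m) - 1) = ?n + 1 - j (?k + 1 - m)"
  proof
    fix m assume m: "m \<in> {1..?k}"
    then have "?k + 1 - m \<in> {1..?k}" by auto
    then show "\<pi>' ! (i (position \<sigma>' m) - 1) = ?n + 1 - j (?k + 1 - m)"
      using position_map_compl[OF perm m] position_in_range(1)[OF perm] \<pi>_comp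
      unfolding \<sigma>'_def j_def by simp
  qed
  have oy': "\<forall>y\<in>(\<lambda>y. ?k - y) ` Y. ext_seq ?n ?k (\<lambda>m. \<pi>' ! (i (position \<sigma>' m) - 1)) (y + 1)
               = ext_seq ?n ?k (\<lambda>m. \<pi>' ! (i (position \<sigma>' m) - 1)) y + 1"
    using ext_seq_reflect_adjacent[OF j_comp j_bound] oy Y by fastforce
  have "length \<pi>' = ?n" "length \<sigma>' = ?k" unfolding \<pi>'_def \<sigma>'_def by auto
  then show ?thesis unfolding occurs_at_def Let_def \<pi>'_def[symmetric] \<sigma>'_def[symmetric]
    using r m iso' ox oy' by simp
qed

text \<open>Inversion swaps the roles of indices and values: the new index sequence is the old sorted
  value sequence \<open>j\<close>, and the new value sequence is the old index sequence \<open>i\<close>.\<close>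

lemma occurs_at_inv:
  assumes v: "valid_bvpat (\<sigma>, X, Y)" and "is_perm \<pi>" and o: "occurs_at \<pi> \<sigma> X Y i"
  shows "occurs_at (perm_inv_list \<pi>) (perm_inv_list \<sigma>) Y X (\<lambda>m. \<pi> ! (i (position \<sigma> m) - 1))"
proof -
  let ?k = "length \<sigma>" and ?n = "length \<pi>"
  define \<pi>' where "\<pi>' = perm_inv_list \<pi>"
  define \<sigma>' where "\<sigma>' = perm_inv_list \<sigma>"
  define j where "j = (\<lambda>m. \<pi> ! (i (position \<sigma> m) - 1))"
  have perm: "is_perm \<sigma>" and X: "X \<subseteq> {0..?k}" using v by (auto simp: valid_bvpat_def)
  have r: "\<forall>a\<in>{1..?k}. 1 \<le> i a \<and> i a \<le> ?n"
    and m: "\<forall>a\<in>{1..?k}. \<forall>b\<in>{1..?k}. a < b \<longrightarrow> i a < i b"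
    and iso: "\<forall>a\<in>{1..?k}. \<forall>b\<in>{1..?k}. (\<pi> ! (i a - 1) < \<pi> ! (i b - 1)) \<longleftrightarrow> (\<sigma> ! (a - 1) < \<sigma> ! (b - 1))"
    and ox: "\<forall>x\<in>X. ext_seq ?n ?k i (x + 1) = ext_seq ?n ?k i x + 1"
    and oy: "\<forall>y\<in>Y. ext_seq ?n ?k j (y + 1) = ext_seq ?n ?k j y + 1"
    using o unfolding occurs_at_def Let_def j_def by auto
  note pos = position_in_range[OF perm]
  have j_range: "j m \<in> {1..?n}" if "m \<in> {1..?k}" for m
    using nth_is_perm[OF \<open>is_perm \<pi>\<close>, of "i (position \<sigma> m) - 1"] r pos(1)[OF that]
    unfolding j_def by fastforce
  have \<pi>'_j: "\<pi>' ! (j m - 1) = i (position \<sigma> m)" if "m \<in> {1..?k}" for m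
  proof -
    have i_pos: "1 \<le> i (position \<sigma> m)" "i (position \<sigma> m) \<le> ?n" using r pos(1)[OF that] by auto
    have "\<pi>' ! (j m - 1) = position \<pi> (j m)"
      using nth_perm_inv_list[of "j m - 1" \<pi>] j_range[OF that] unfolding \<pi>'_def by auto
    also have "\<dots> = i (position \<sigma> m)"
      using position_nth[OF \<open>is_perm \<pi>\<close>, of "i (position \<sigma> m) - 1"] i_pos unfolding j_def by auto
    finally show ?thesis .
  qed
  have \<sigma>'_nth: "\<sigma>' ! (m - 1) = position \<sigma> m" if "m \<in> {1..?k}" for m
    using nth_perm_inv_list[of "m - 1" \<sigma>] that unfolding \<sigma>'_def by auto
  have j_mono: "\<forall>a\<in>{1..?k}. \<forall>b\<in>{1..?k}. a < b \<longrightarrow> j a < j b"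
    using iso pos unfolding j_def by auto
  have i_less_iff: "i a < i b \<longleftrightarrow> a < b" if "a \<in> {1..?k}" "b \<in> {1..?k}" for a b
    using m that by (metis less_asym linorder_neqE_nat)
  have iso': "\<forall>a\<in>{1..?k}. \<forall>b\<in>{1..?k}. (\<pi>' ! (j a - 1) < \<pi>' ! (j b - 1)) \<longleftrightarrow> (\<sigma>' ! (a - 1) < \<sigma>' ! (b - 1))"
    using \<pi>'_j \<sigma>'_nth i_less_iff pos by simp
  have value_eq: "\<forall>m\<in>{1..?k}. \<pi>' ! (j (position \<sigma>' m) - 1) = i m"
  proof
    fix m assume m: "m \<in> {1..?k}"
    then have "\<sigma> ! (m - 1) \<in> {1..?k}" "position \<sigma> (\<sigma> ! (m - 1)) = m"
      using nth_is_perm[OF perm, of "m - 1"] position_nth[OF perm, of "m - 1"] by auto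
    then show "\<pi>' ! (j (position \<sigma>' m) - 1) = i m"
      using \<pi>'_j position_perm_inv_list[OF perm m] unfolding \<sigma>'_def by simp
  qed
  have ox': "\<forall>x\<in>X. ext_seq ?n ?k (\<lambda>m. \<pi>' ! (j (position \<sigma>' m) - 1)) (x + 1)
               = ext_seq ?n ?k (\<lambda>m. \<pi>' ! (j (position \<sigma>' m) - 1)) x + 1"
    using ox X ext_seq_cong[OF value_eq] by (auto simp: subset_iff)
  have "length \<pi>' = ?n" "length \<sigma>' = ?k" unfolding \<pi>'_def \<sigma>'_def by auto
  then show ?thesis unfolding occurs_at_def Let_def \<pi>'_def[symmetric] \<sigma>'_def[symmetric] j_def[symmetric]
    using j_range j_mono iso' oy ox' by simp
qed

lemma valid_bvpat_bv_rev: "valid_bvpat q \<Longrightarrow> valid_bvpat (bv_rev q)"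
  by (auto simp: valid_bvpat_def bv_rev_def permutations_of_set_def split: prod.splits)

lemma valid_bvpat_bv_comp: "valid_bvpat q \<Longrightarrow> valid_bvpat (bv_comp q)"
  using map_compl_perm_of_set by (auto simp: valid_bvpat_def bv_comp_def split: prod.splits)

lemma valid_bvpat_bv_inv: "valid_bvpat q \<Longrightarrow> valid_bvpat (bv_inv q)"
  using is_perm_perm_inv_list by (auto simp: valid_bvpat_def bv_inv_def split: prod.splits)

lemma reflect_image_reflect_image:
  "Y \<subseteq> {0..k} \<Longrightarrow> (\<lambda>y. k - y) ` (\<lambda>y. k - y) ` Y = (Y :: nat set)"
  by (force simp: image_image subset_iff intro: image_cong[THEN trans])

lemma bv_rev_bv_rev: "valid_bvpat q \<Longrightarrow> bv_rev (bv_rev q) = q"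
  by (auto simp: valid_bvpat_def bv_rev_def reflect_image_reflect_image split: prod.splits)

lemma map_compl_map_compl:
  fixes xs :: "nat list"
  assumes "\<forall>v\<in>set xs. v \<le> k"
  shows "map (\<lambda>v. k + 1 - v) (map (\<lambda>v. k + 1 - v) xs) = xs"
  unfolding map_map o_def
proof (rule map_idI)
  fix x assume "x \<in> set xs"
  with assms have "x \<le> k" by blast
  then show "k + 1 - (k + 1 - x) = x" by simp
qed

lemma bv_comp_bv_comp:
  assumes "valid_bvpat q"
  shows "bv_comp (bv_comp q) = q"
proof -
  obtain \<sigma> X Y where q: "q = (\<sigma>, X, Y)" by (metis prod.exhaust)
  with assms have "\<forall>v\<in>set \<sigma>. v \<le> length \<sigma>" "Y \<subseteq> {0..length \<sigma>}"
    by (auto simp: valid_bvpat_def permutations_of_set_def)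
  then show ?thesis using map_compl_map_compl[of \<sigma> "length \<sigma>"]
    by (simp add: q bv_comp_def reflect_image_reflect_image del: map_map)
qed

lemma bv_inv_bv_inv: "valid_bvpat q \<Longrightarrow> bv_inv (bv_inv q) = q"
  by (auto simp: valid_bvpat_def bv_inv_def perm_inv_list_perm_inv_list split: prod.splits)

lemma contains_bv_rev:
  assumes "valid_bvpat q" "contains_bv \<pi> q"
  shows "contains_bv (rev \<pi>) (bv_rev q)"
proof -
  obtain \<sigma> X Y where q: "q = (\<sigma>, X, Y)" by (metis prod.exhaust)
  then obtain i where "occurs_at \<pi> \<sigma> X Y i" using contains_bv_iff_occurs_at assms by metis
  then show ?thesis
    using occurs_at_rev contains_bv_iff_occurs_at valid_bvpat_bv_rev assms(1)
    unfolding q bv_rev_def by fastforce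
qed

lemma contains_bv_comp:
  assumes "valid_bvpat q" "is_perm \<pi>" "contains_bv \<pi> q"
  shows "contains_bv (map (\<lambda>v. length \<pi> + 1 - v) \<pi>) (bv_comp q)"
proof -
  obtain \<sigma> X Y where q: "q = (\<sigma>, X, Y)" by (metis prod.exhaust)
  then obtain i where "occurs_at \<pi> \<sigma> X Y i" using contains_bv_iff_occurs_at assms by metis
  then show ?thesis
    using occurs_at_comp contains_bv_iff_occurs_at valid_bvpat_bv_comp assms(1,2)
    unfolding q bv_comp_def by fastforce
qed

lemma contains_bv_inv:
  assumes "valid_bvpat q" "is_perm \<pi>" "contains_bv \<pi> q"
  shows "contains_bv (perm_inv_list \<pi>) (bv_inv q)"
proof -
  obtain \<sigma> X Y where q: "q = (\<sigma>, X, Y)" by (metis prod.exhaust)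
  then obtain i where "occurs_at \<pi> \<sigma> X Y i" using contains_bv_iff_occurs_at assms by metis
  then show ?thesis
    using occurs_at_inv contains_bv_iff_occurs_at valid_bvpat_bv_inv assms(1,2)
    unfolding q bv_inv_def by fastforce
qed

lemma avoid_count_eq_by_involution:
  assumes "\<And>\<pi>. \<pi> \<in> permutations_of_set {1..n} \<Longrightarrow> g \<pi> \<in> permutations_of_set {1..n} \<and> g (g \<pi>) = \<pi>"
    and "\<And>\<pi>. \<pi> \<in> permutations_of_set {1..n} \<Longrightarrow> contains_bv (g \<pi>) p' \<longleftrightarrow> contains_bv \<pi> p"
  shows "avoid_count n p' = avoid_count n p"
proof -
  have "bij_betw g {\<pi> \<in> permutations_of_set {1..n}. \<not> contains_bv \<pi> p}
                    {\<pi> \<in> permutations_of_set {1..n}. \<not> contains_bv \<pi> p'}"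
  proof (rule bij_betw_byWitness[where f' = g])
    show "g ` {\<pi> \<in> permutations_of_set {1..n}. \<not> contains_bv \<pi> p'}
           \<subseteq> {\<pi> \<in> permutations_of_set {1..n}. \<not> contains_bv \<pi> p}"
      using assms(1) assms(2)[of "g _"] by fastforce
  qed (use assms in auto)
  then show ?thesis unfolding avoid_count_def by (simp add: bij_betw_same_card)
qed

lemma avoid_count_bv_rev:
  assumes "valid_bvpat q"
  shows "avoid_count n (bv_rev q) = avoid_count n q"
proof (rule avoid_count_eq_by_involution[where g = rev])
  fix \<pi> assume "\<pi> \<in> permutations_of_set {1..n}"
  then show "rev \<pi> \<in> permutations_of_set {1..n} \<and> rev (rev \<pi>) = \<pi>"
    by (simp add: permutations_of_set_def)
  show "contains_bv (rev \<pi>) (bv_rev q) \<longleftrightarrow> contains_bv \<pi> q"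
    using contains_bv_rev[OF assms] contains_bv_rev[OF valid_bvpat_bv_rev[OF assms], of "rev \<pi>"]
    by (auto simp: bv_rev_bv_rev[OF assms])
qed

lemma avoid_count_bv_comp:
  assumes "valid_bvpat q"
  shows "avoid_count n (bv_comp q) = avoid_count n q"
proof (rule avoid_count_eq_by_involution[where g = "map (\<lambda>v. n + 1 - v)"])
  fix \<pi> assume p: "\<pi> \<in> permutations_of_set {1..n}"
  then have perm: "is_perm \<pi>" and "length \<pi> = n" "\<forall>v\<in>set \<pi>. v \<le> n"
    using is_perm_if_perm_of_set length_perm_of_set by (auto simp: permutations_of_set_def)
  then have invol: "map (\<lambda>v. n + 1 - v) (map (\<lambda>v. n + 1 - v) \<pi>) = \<pi>"
    by (simp only: map_compl_map_compl)
  then show "map (\<lambda>v. n + 1 - v) \<pi> \<in> permutations_of_set {1..n} \<and>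
      map (\<lambda>v. n + 1 - v) (map (\<lambda>v. n + 1 - v) \<pi>) = \<pi>"
    using map_compl_perm_of_set[OF p] by simp
  show "contains_bv (map (\<lambda>v. n + 1 - v) \<pi>) (bv_comp q) \<longleftrightarrow> contains_bv \<pi> q"
  proof
    have "is_perm (map (\<lambda>v. n + 1 - v) \<pi>)"
      using is_perm_if_perm_of_set[OF map_compl_perm_of_set[OF p]] .
    moreover assume "contains_bv (map (\<lambda>v. n + 1 - v) \<pi>) (bv_comp q)"
    ultimately show "contains_bv \<pi> q"
      using contains_bv_comp[OF valid_bvpat_bv_comp[OF assms]] invol \<open>length \<pi> = n\<close>
      by (fastforce simp: bv_comp_bv_comp[OF assms])
  qed (use contains_bv_comp[OF assms perm] \<open>length \<pi> = n\<close> in simp)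
qed

lemma avoid_count_bv_inv:
  assumes "valid_bvpat q"
  shows "avoid_count n (bv_inv q) = avoid_count n q"
proof (rule avoid_count_eq_by_involution[where g = perm_inv_list])
  fix \<pi> assume p: "\<pi> \<in> permutations_of_set {1..n}"
  then have perm: "is_perm \<pi>" and "length \<pi> = n"
    using is_perm_if_perm_of_set length_perm_of_set by auto
  then show "perm_inv_list \<pi> \<in> permutations_of_set {1..n} \<and> perm_inv_list (perm_inv_list \<pi>) = \<pi>"
    using is_perm_perm_inv_list perm_inv_list_perm_inv_list by fastforce
  show "contains_bv (perm_inv_list \<pi>) (bv_inv q) \<longleftrightarrow> contains_bv \<pi> q"
  proof
    assume "contains_bv (perm_inv_list \<pi>) (bv_inv q)"
    then have "contains_bv (perm_inv_list (perm_inv_list \<pi>)) (bv_inv (bv_inv q))"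
      by (rule contains_bv_inv[OF valid_bvpat_bv_inv[OF assms] is_perm_perm_inv_list[OF perm]])
    then show "contains_bv \<pi> q" by (simp add: bv_inv_bv_inv[OF assms] perm_inv_list_perm_inv_list[OF perm])
  qed (rule contains_bv_inv[OF assms perm])
qed

lemma sym_class_avoid_count:
  assumes "q \<in> sym_class p" "valid_bvpat p"
  shows "valid_bvpat q \<and> avoid_count n q = avoid_count n p"
  using assms(1)
proof induction
  case base
  then show ?case using assms(2) by simp
next
  case (inv q)
  then show ?case using valid_bvpat_bv_inv avoid_count_bv_inv by simp
next
  case (rev q)
  then show ?case using valid_bvpat_bv_rev avoid_count_bv_rev by simp
next
  case (comp q)
  then show ?case using valid_bvpat_bv_comp avoid_count_bv_comp by simp
qed

section \<open>The base patterns\<close>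

definition has_pair :: "(nat \<Rightarrow> nat \<Rightarrow> bool) \<Rightarrow> nat list \<Rightarrow> bool" where
  "has_pair R t \<longleftrightarrow> (\<exists>a b. a < b \<and> b < length t \<and> R (t ! a) (t ! b))"

lemma has_pair_tl:
  "has_pair R (tl \<pi>) \<longleftrightarrow> (\<exists>a b. 1 \<le> a \<and> a < b \<and> b < length \<pi> \<and> R (\<pi> ! a) (\<pi> ! b))"
proof
  assume "has_pair R (tl \<pi>)"
  then obtain a b where "a < b" "b < length \<pi> - 1" "R (\<pi> ! Suc a) (\<pi> ! Suc b)"
    by (auto simp: has_pair_def nth_tl)
  then show "\<exists>a b. 1 \<le> a \<and> a < b \<and> b < length \<pi> \<and> R (\<pi> ! a) (\<pi> ! b)" by force
next
  assume "\<exists>a b. 1 \<le> a \<and> a < b \<and> b < length \<pi> \<and> R (\<pi> ! a) (\<pi> ! b)"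
  then obtain a b where "1 \<le> a" "a < b" "b < length \<pi>" "R (\<pi> ! a) (\<pi> ! b)" by blast
  then have "a - 1 < b - 1" "b - 1 < length (tl \<pi>)" "R (tl \<pi> ! (a - 1)) (tl \<pi> ! (b - 1))"
    by (auto simp: nth_tl)
  then show "has_pair R (tl \<pi>)" unfolding has_pair_def by blast
qed

lemma has_pair_rev: "has_pair R (rev t) \<longleftrightarrow> has_pair (\<lambda>x y. R y x) t"
proof
  assume "has_pair R (rev t)"
  then obtain a b where ab: "a < b" "b < length t" "R (rev t ! a) (rev t ! b)"
    by (auto simp: has_pair_def)
  then have "length t - 1 - b < length t - 1 - a" "length t - 1 - a < length t"
    "R (t ! (length t - 1 - a)) (t ! (length t - 1 - b))"
    by (auto simp: rev_nth)
  then show "has_pair (\<lambda>x y. R y x) t" unfolding has_pair_def by blast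
next
  assume "has_pair (\<lambda>x y. R y x) t"
  then obtain a b where ab: "a < b" "b < length t" "R (t ! b) (t ! a)"
    by (auto simp: has_pair_def)
  moreover have "t ! a = rev t ! (length t - 1 - a)" "t ! b = rev t ! (length t - 1 - b)"
    using ab by (auto simp: rev_nth)
  moreover have "length t - 1 - b < length t - 1 - a" "length t - 1 - a < length (rev t)"
    using ab by auto
  ultimately show "has_pair R (rev t)" unfolding has_pair_def by metis
qed

lemma has_pair_less_iff:
  assumes "set t = {m..<M}" "distinct t"
  shows "has_pair (<) t \<longleftrightarrow> t \<noteq> rev [m..<M]"
proof -
  have "has_pair (<) t \<longleftrightarrow> \<not> sorted_wrt (>) t"
    unfolding has_pair_def sorted_wrt_iff_nth_less
  proof
    assume "\<exists>a b. a < b \<and> b < length t \<and> t ! a < t ! b"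
    then show "\<not> (\<forall>i j. i < j \<longrightarrow> j < length t \<longrightarrow> t ! j < t ! i)" by (meson less_asym)
  next
    assume "\<not> (\<forall>i j. i < j \<longrightarrow> j < length t \<longrightarrow> t ! j < t ! i)"
    then obtain a b where ab: "a < b" "b < length t" "\<not> t ! b < t ! a" by blast
    moreover have "t ! a \<noteq> t ! b" using ab nth_eq_iff_index_eq[OF assms(2)] by fastforce
    ultimately show "\<exists>a b. a < b \<and> b < length t \<and> t ! a < t ! b" by (metis linorder_neqE_nat)
  qed
  also have "sorted_wrt (>) t \<longleftrightarrow> sorted_wrt (<) (rev t)" by (simp add: sorted_wrt_rev)
  also have "\<dots> \<longleftrightarrow> rev t = [m..<M]"
  proof
    assume "sorted_wrt (<) (rev t)"
    then have "sorted (rev t)" "distinct (rev t)" by (auto simp: strict_sorted_iff)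
    then have "sorted_list_of_set (set (rev t)) = rev t"
      by (rule sorted_list_of_set.idem_if_sorted_distinct)
    then show "rev t = [m..<M]" using assms(1) by simp
  qed simp
  finally show ?thesis by (simp add: rev_swap)
qed

lemma has_pair_greater_iff:
  assumes "set t = {m..<M}" "distinct t"
  shows "has_pair (>) t \<longleftrightarrow> t \<noteq> [m..<M]"
  using has_pair_less_iff[of "rev t" m M] has_pair_rev[of "(<)" t] assms by (simp add: rev_swap)

text \<open>In a list whose entries form an interval, every ascent yields an ascent by exactly one: the
  value \<open>t ! a + 1\<close> occurs somewhere, either after position \<open>a\<close> or before position \<open>b\<close>, and
  in the latter case we recurse on a shorter value gap.\<close>

lemma has_pair_succ_if_ascent:
  assumes "set t = {m..<M}" "a < b" "b < length t" "t ! a < t ! b"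
  shows "has_pair (\<lambda>x y. y = x + 1) t"
  using assms(2-)
proof (induction "t ! b - t ! a" arbitrary: a b rule: less_induct)
  case less
  show ?case
  proof (cases "t ! b = t ! a + 1")
    case True
    then show ?thesis using less.prems unfolding has_pair_def by blast
  next
    case False
    then have "t ! a + 1 < t ! b" using less.prems by auto
    moreover have "t ! a \<in> set t" "t ! b \<in> set t" using less.prems by auto
    ultimately have "t ! a + 1 \<in> set t" using assms(1) by auto
    then obtain c where c: "c < length t" "t ! c = t ! a + 1" by (auto simp: in_set_conv_nth)
    show ?thesis
    proof (cases "a < c")
      case True
      then show ?thesis using c unfolding has_pair_def by blast
    next
      case False
      moreover have "c \<noteq> a" using c by auto
      ultimately have "c < a" by simp
      then have "c < b" "t ! c < t ! b" "t ! b - t ! c < t ! b - t ! a"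
        using less.prems c \<open>t ! a + 1 < t ! b\<close> by auto
      then show ?thesis using less.hyps less.prems(2) by blast
    qed
  qed
qed

lemma has_pair_succ_iff:
  assumes "set t = {m..<M}"
  shows "has_pair (\<lambda>x y. y = x + 1) t \<longleftrightarrow> has_pair (<) t"
  using has_pair_succ_if_ascent[OF assms] unfolding has_pair_def by fastforce

lemma has_pair_pred_iff:
  assumes "set t = {m..<M}"
  shows "has_pair (\<lambda>x y. x = y + 1) t \<longleftrightarrow> has_pair (>) t"
  using has_pair_succ_iff[of "rev t" m M] has_pair_rev[of _ t] assms by simp

lemma perm_nth_gt_head:
  assumes "\<pi> \<in> permutations_of_set {1..n}" "\<pi> ! 0 = 1" "0 < x" "x < n"
  shows "1 < \<pi> ! x"
proof -
  have "distinct \<pi>" "set \<pi> = {1..n}" "length \<pi> = n"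
    using assms(1) length_perm_of_set by (auto simp: permutations_of_set_def)
  then have "\<pi> ! x \<in> {1..n}" "\<pi> ! x \<noteq> \<pi> ! 0"
    using assms(3,4) nth_eq_iff_index_eq[of \<pi> x 0] by auto
  then show ?thesis using assms(2) by auto
qed

lemma contains_bv_iff_head_one_and_pair:
  fixes R :: "nat \<Rightarrow> nat \<Rightarrow> bool"
  assumes p: "\<pi> \<in> permutations_of_set {1..n}" and v: "valid_bvpat (\<sigma>, X, Y)"
    and occurs_imp: "\<And>i. occurs_at \<pi> \<sigma> X Y i \<Longrightarrow>
      i 1 = 1 \<and> \<pi> ! 0 = 1 \<and> 1 < i 2 \<and> i 2 < i 3 \<and> i 3 \<le> n \<and> R (\<pi> ! (i 2 - 1)) (\<pi> ! (i 3 - 1))"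
    and occurs_if: "\<And>a b. \<pi> ! 0 = 1 \<Longrightarrow> 0 < a \<Longrightarrow> a < b \<Longrightarrow> b < n \<Longrightarrow>
      1 < \<pi> ! a \<Longrightarrow> 1 < \<pi> ! b \<Longrightarrow> R (\<pi> ! a) (\<pi> ! b) \<Longrightarrow>
      occurs_at \<pi> \<sigma> X Y (\<lambda>m. if m = 1 then 1 else if m = 2 then a + 1 else b + 1)"
  shows "contains_bv \<pi> (\<sigma>, X, Y) \<longleftrightarrow> \<pi> ! 0 = 1 \<and> has_pair R (tl \<pi>)"
proof -
  have "contains_bv \<pi> (\<sigma>, X, Y) \<longleftrightarrow>
      \<pi> ! 0 = 1 \<and> (\<exists>a b. 1 \<le> a \<and> a < b \<and> b < n \<and> R (\<pi> ! a) (\<pi> ! b))"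
    unfolding contains_bv_iff_occurs_at[OF v]
  proof safe
    fix i assume "occurs_at \<pi> \<sigma> X Y i"
    then have "i 1 = 1 \<and> \<pi> ! 0 = 1 \<and> 1 < i 2 \<and> i 2 < i 3 \<and> i 3 \<le> n \<and> R (\<pi> ! (i 2 - 1)) (\<pi> ! (i 3 - 1))"
      by (rule occurs_imp)
    then show "\<pi> ! 0 = 1" and "\<exists>a b. 1 \<le> a \<and> a < b \<and> b < n \<and> R (\<pi> ! a) (\<pi> ! b)"
      by (simp, intro exI[of _ "i 2 - 1"] exI[of _ "i 3 - 1"]) auto
  next
    fix a b assume "\<pi> ! 0 = 1" "1 \<le> a" "a < b" "b < n" "R (\<pi> ! a) (\<pi> ! b)"
    moreover have "1 < \<pi> ! a" "1 < \<pi> ! b"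
      using perm_nth_gt_head[OF p \<open>\<pi> ! 0 = 1\<close>] \<open>1 \<le> a\<close> \<open>a < b\<close> \<open>b < n\<close> by auto
    ultimately have "occurs_at \<pi> \<sigma> X Y (\<lambda>m. if m = 1 then 1 else if m = 2 then a + 1 else b + 1)"
      by (intro occurs_if) auto
    then show "\<exists>i. occurs_at \<pi> \<sigma> X Y i" by blast
  qed
  then show ?thesis using has_pair_tl length_perm_of_set[OF p] by simp
qed

text \<open>Stated in the simp normal form of \<open>\<forall>a\<in>{1..length [x, y, z]}. P a\<close>.\<close>

lemma ball_Suc_0_to_3: "(\<forall>a\<in>{Suc 0..Suc (Suc (Suc 0))}. P a) \<longleftrightarrow> P 1 \<and> P 2 \<and> P 3"
proof -
  have "{Suc 0..Suc (Suc (Suc 0))} = {1, 2, 3}" by auto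
  then show ?thesis by simp
qed

lemma is_perm_123: "is_perm [1,2,3]" and is_perm_132: "is_perm [1,3,2]"
  by (auto simp: permutations_of_set_def)

lemma position_123: "position [1,2,3] 1 = 1" "position [1,2,3] 2 = 2" "position [1,2,3] 3 = 3"
  using position_nth[OF is_perm_123, of 0] position_nth[OF is_perm_123, of 1]
    position_nth[OF is_perm_123, of 2] by simp_all

lemma position_132: "position [1,3,2] 1 = 1" "position [1,3,2] 2 = 3" "position [1,3,2] 3 = 2"
  using position_nth[OF is_perm_132, of 0] position_nth[OF is_perm_132, of 1]
    position_nth[OF is_perm_132, of 2] by simp_all

lemma contains_bv_123_iff:
  assumes "\<pi> \<in> permutations_of_set {1..n}"
  shows "contains_bv \<pi> ([1,2,3], {0}, {0}) \<longleftrightarrow> \<pi> ! 0 = 1 \<and> has_pair (<) (tl \<pi>)"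
  using is_perm_123 length_perm_of_set[OF assms]
  by (intro contains_bv_iff_head_one_and_pair[OF assms])
    (auto simp: valid_bvpat_def occurs_at_def ball_Suc_0_to_3 ext_seq_def position_123[simplified])

lemma contains_bv_123_adjacent_iff:
  assumes "\<pi> \<in> permutations_of_set {1..n}"
  shows "contains_bv \<pi> ([1,2,3], {0}, {0,2}) \<longleftrightarrow> \<pi> ! 0 = 1 \<and> has_pair (\<lambda>x y. y = x + 1) (tl \<pi>)"
  using is_perm_123 length_perm_of_set[OF assms]
  by (intro contains_bv_iff_head_one_and_pair[OF assms])
    (auto simp: valid_bvpat_def occurs_at_def ball_Suc_0_to_3 ext_seq_def position_123[simplified])

lemma contains_bv_132_iff:
  assumes "\<pi> \<in> permutations_of_set {1..n}"
  shows "contains_bv \<pi> ([1,3,2], {0}, {0}) \<longleftrightarrow> \<pi> ! 0 = 1 \<and> has_pair (>) (tl \<pi>)"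
  using is_perm_132 length_perm_of_set[OF assms]
  by (intro contains_bv_iff_head_one_and_pair[OF assms])
    (auto simp: valid_bvpat_def occurs_at_def ball_Suc_0_to_3 ext_seq_def position_132[simplified])

lemma contains_bv_132_adjacent_iff:
  assumes "\<pi> \<in> permutations_of_set {1..n}"
  shows "contains_bv \<pi> ([1,3,2], {0}, {0,2}) \<longleftrightarrow> \<pi> ! 0 = 1 \<and> has_pair (\<lambda>x y. x = y + 1) (tl \<pi>)"
  using is_perm_132 length_perm_of_set[OF assms]
  by (intro contains_bv_iff_head_one_and_pair[OF assms])
    (auto simp: valid_bvpat_def occurs_at_def ball_Suc_0_to_3 ext_seq_def position_132[simplified])

lemma perms_head_one_eq:
  fixes n :: nat
  assumes "n \<ge> 1"
  shows "{\<pi> \<in> permutations_of_set {1..n}. \<pi> ! 0 = 1} = (\<lambda>t. 1 # t) ` permutations_of_set {2..<n + 1}"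
proof -
  have interval: "{1..n} = insert 1 {2..<n + 1}" "1 \<notin> {2..<n + 1}" using assms by auto
  show ?thesis
  proof (intro equalityI subsetI)
    fix \<pi> assume \<pi>: "\<pi> \<in> {\<pi> \<in> permutations_of_set {1..n}. \<pi> ! 0 = 1}"
    then have "\<pi> \<noteq> []" using assms length_perm_of_set by fastforce
    with \<pi> have "\<pi> = 1 # tl \<pi>" by (cases \<pi>) auto
    with \<pi> have "tl \<pi> \<in> permutations_of_set {2..<n + 1}"
      unfolding permutations_of_set_def interval by (metis (mono_tags) distinct.simps(2)
        insert_ident list.set(2) mem_Collect_eq interval(2))
    with \<open>\<pi> = 1 # tl \<pi>\<close> show "\<pi> \<in> (\<lambda>t. 1 # t) ` permutations_of_set {2..<n + 1}" by blast
  qed (use assms in \<open>auto simp: permutations_of_set_def interval\<close>)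
qed

lemma card_perms_head_one:
  fixes n :: nat
  assumes "n \<ge> 1"
  shows "card {\<pi> \<in> permutations_of_set {1..n}. \<pi> ! 0 = 1} = fact (n - 1)"
  unfolding perms_head_one_eq[OF assms] by (simp add: card_image)

lemma avoid_count_head_one_and_pair:
  fixes n :: nat and R :: "nat \<Rightarrow> nat \<Rightarrow> bool"
  assumes "n \<ge> 1"
    and contains_iff: "\<And>\<pi>. \<pi> \<in> permutations_of_set {1..n} \<Longrightarrow>
                          contains_bv \<pi> p \<longleftrightarrow> \<pi> ! 0 = 1 \<and> has_pair R (tl \<pi>)"
    and tail_iff: "\<And>t. t \<in> permutations_of_set {2..<n + 1} \<Longrightarrow> has_pair R t \<longleftrightarrow> t \<noteq> w"
    and w: "w \<in> permutations_of_set {2..<n + 1}"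
  shows "avoid_count n p = fact n - fact (n - 1) + 1"
proof -
  let ?P = "permutations_of_set {1..n}"
  let ?H = "{\<pi> \<in> ?P. \<pi> ! 0 = 1}"
  have "\<not> contains_bv \<pi> p \<longleftrightarrow> \<pi> \<notin> ?H \<or> \<pi> = 1 # w" if "\<pi> \<in> ?P" for \<pi>
  proof (cases "\<pi> \<in> ?H")
    case True
    then obtain t where "\<pi> = 1 # t" "t \<in> permutations_of_set {2..<n + 1}"
      using perms_head_one_eq[OF assms(1)] by blast
    then show ?thesis using contains_iff[OF that] tail_iff that by auto
  qed (use contains_iff[OF that] that in auto)
  then have "{\<pi> \<in> ?P. \<not> contains_bv \<pi> p} = insert (1 # w) (?P - ?H)"
    using perms_head_one_eq[OF assms(1)] w by auto
  moreover have "1 # w \<notin> ?P - ?H" by simp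
  ultimately have "avoid_count n p = card (?P - ?H) + 1"
    unfolding avoid_count_def by simp
  also have "card (?P - ?H) = fact n - fact (n - 1)"
    by (simp add: card_Diff_subset card_perms_head_one[OF assms(1)] del: One_nat_def)
  finally show ?thesis .
qed

lemma avoid_count_base_patterns:
  fixes n :: nat
  assumes "n \<ge> 1"
  shows "avoid_count n ([1,2,3], {0}, {0}) = fact n - fact (n - 1) + 1"
    and "avoid_count n ([1,2,3], {0}, {0,2}) = fact n - fact (n - 1) + 1"
    and "avoid_count n ([1,3,2], {0}, {0}) = fact n - fact (n - 1) + 1"
    and "avoid_count n ([1,3,2], {0}, {0,2}) = fact n - fact (n - 1) + 1"
proof -
  have dec: "rev [2..<n + 1] \<in> permutations_of_set {2..<n + 1}"
    and inc: "[2..<n + 1] \<in> permutations_of_set {2..<n + 1}"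
    by (auto simp: permutations_of_set_def)
  show "avoid_count n ([1,2,3], {0}, {0}) = fact n - fact (n - 1) + 1"
    using contains_bv_123_iff has_pair_less_iff[of _ 2 "n + 1"]
    by (intro avoid_count_head_one_and_pair[OF assms _ _ dec]) (auto simp: permutations_of_set_def)
  show "avoid_count n ([1,2,3], {0}, {0,2}) = fact n - fact (n - 1) + 1"
    using contains_bv_123_adjacent_iff has_pair_succ_iff[of _ 2 "n + 1"] has_pair_less_iff[of _ 2 "n + 1"]
    by (intro avoid_count_head_one_and_pair[OF assms _ _ dec]) (auto simp: permutations_of_set_def)
  show "avoid_count n ([1,3,2], {0}, {0}) = fact n - fact (n - 1) + 1"
    using contains_bv_132_iff has_pair_greater_iff[of _ 2 "n + 1"]
    by (intro avoid_count_head_one_and_pair[OF assms _ _ inc]) (auto simp: permutations_of_set_def)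
  show "avoid_count n ([1,3,2], {0}, {0,2}) = fact n - fact (n - 1) + 1"
    using contains_bv_132_adjacent_iff has_pair_pred_iff[of _ 2 "n + 1"] has_pair_greater_iff[of _ 2 "n + 1"]
    by (intro avoid_count_head_one_and_pair[OF assms _ _ inc]) (auto simp: permutations_of_set_def)
qed

theorem mainTheorem14:
  fixes p :: bvpat and n :: nat
  assumes "p \<in> sym_class ([1,2,3], {0}, {0}) \<union> sym_class ([1,2,3], {0}, {0,2})
             \<union> sym_class ([1,3,2], {0}, {0}) \<union> sym_class ([1,3,2], {0}, {0,2})"
    and "n \<ge> 1"
  shows "avoid_count n p = fact n - fact (n - 1) + 1"
proof -
  have valid: "valid_bvpat ([1,2,3], {0}, {0})" "valid_bvpat ([1,2,3], {0}, {0,2})"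
    "valid_bvpat ([1,3,2], {0}, {0})" "valid_bvpat ([1,3,2], {0}, {0,2})"
    using is_perm_123 is_perm_132 by (auto simp: valid_bvpat_def)
  show ?thesis
    using assms(1) avoid_count_base_patterns[OF assms(2)]
      sym_class_avoid_count[OF _ valid(1), of p n] sym_class_avoid_count[OF _ valid(2), of p n]
      sym_class_avoid_count[OF _ valid(3), of p n] sym_class_avoid_count[OF _ valid(4), of p n]
    by auto
qed

end
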